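(* For $\vec\mu\in\mathbb{R}^k$ and $\vec v\in(\mathbb{R}^{\ge0})^k$, let $f(\vec\mu,\vec v)$ be the supremum of $\mathbb{E}[\max_{j<k}\vec x(j)]$ over all random vectors $\vec x$ in $\mathbb{R}^k$ with $\mathbb{E}[\vec x]=\vec\mu$ and $\mathrm{Var}(\vec x(j))=\vec v(j)^2$ for all $j<k$. Then for every $\vec\mu\in\mathbb{R}^k$, $\vec v\in(\mathbb{R}^{\ge0})^k$: (1) $\max_{j<k}\vec\mu(j)\le f(\vec\mu,\vec v)\le\max_{j<k}\vec\mu(j)+\frac12\sum_{j<k}\vec v(j)$; (2) if $\vec\mu_i\in\mathbb{R}^k,\vec v_i\in(\mathbb{R}^{\ge0})^k$ for $i\in\{0,1\}$ satisfy $\vec\mu=\frac12(\vec\mu_0+\vec\mu_1)$ and $\vec v(j)^2=\frac12\sum_{i\in 2}\big[\vec v_i(j)^2+(\vec\mu_i(j)-\vec\mu(j))^2\big]$ for all $j<k$, then $\frac12\big(f(\vec\mu_0,\vec v_0)+f(\vec\mu_1,\vec v_1)\big)\le f(\vec\mu,\vec v)$. *)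

theory Defs
  imports "HOL-Probability.Probability"
begin

definition admissible_law :: "real^'k \<Rightarrow> real^'k \<Rightarrow> (real^'k) measure \<Rightarrow> bool" where
  "admissible_law mu v M \<longleftrightarrow>
     prob_space M \<and> sets M = sets borel \<and>
     (\<forall>j. integrable M (\<lambda>x. x $ j)) \<and>
     (\<forall>j. integrable M (\<lambda>x. (x $ j)\<^sup>2)) \<and>
     (\<forall>j. (\<integral>x. x $ j \<partial>M) = mu $ j) \<and>
     (\<forall>j. (\<integral>x. (x $ j - (\<integral>y. y $ j \<partial>M))\<^sup>2 \<partial>M) = (v $ j)\<^sup>2)"

definition fmax :: "real^'k \<Rightarrow> real^'k \<Rightarrow> real" where
  "fmax mu v = Sup {(\<integral>x. (MAX j. x $ j) \<partial>M) | M. admissible_law mu v M}"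

end

theory Submission
  imports Defs
begin

(* Both bounds hold for each admissible law M, hence for the supremum.  Below:
   max_j x_j \<ge> x_j integrates to mu_j.  Above: max_j x_j \<le> max_j mu_j + \<Sum>_j (x_j - mu_j)^+,
   and for the centred coordinate E (x_j - mu_j)^+ = E |x_j - mu_j| / 2 \<le> v_j / 2,
   because (E |Y|)^2 \<le> E Y^2.
   Concavity: the mixture that samples from M0 or M1 with probability 1/2 each has the
   averaged mean and second moments, so it is admissible for (mu, v), and its E max_j x_j
   is the average of those of M0 and M1.  The mixture of the point masses at mu + v and
   mu - v shows that the supremum is never taken over the empty set. *)

definition mixture :: "real \<Rightarrow> 'a measure \<Rightarrow> 'a measure \<Rightarrow> 'a measure" where
  "mixture p M0 M1 = measure_pmf (bernoulli_pmf p) \<bind> (\<lambda>b. if b then M0 else M1)"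

context
  fixes p :: real and M0 M1 N :: "'a measure"
  assumes p: "0 \<le> p" "p \<le> 1"
    and prob_space: "prob_space M0" "prob_space M1"
    and sets_eq: "sets M0 = sets N" "sets M1 = sets N"
begin

private lemma choice_measurable:
  "(\<lambda>b. if b then M0 else M1) \<in> measurable (measure_pmf (bernoulli_pmf p)) (subprob_algebra N)"
  using prob_space sets_eq by (auto simp: space_subprob_algebra prob_space_imp_subprob_space)

lemma sets_mixture: "sets (mixture p M0 M1) = sets N"
  unfolding mixture_def by (rule sets_bind[where N=N]) (use sets_eq in auto)

lemma nn_integral_mixture:
  assumes "f \<in> borel_measurable N"
  shows "(\<integral>\<^sup>+x. f x \<partial>mixture p M0 M1) = ennreal p * (\<integral>\<^sup>+x. f x \<partial>M0) + ennreal (1 - p) * (\<integral>\<^sup>+x. f x \<partial>M1)"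
  unfolding mixture_def using p
  by (simp add: nn_integral_bind[OF assms choice_measurable] mult.commute)

lemma prob_space_mixture: "prob_space (mixture p M0 M1)"
proof
  have "emeasure (mixture p M0 M1) (space (mixture p M0 M1)) = (\<integral>\<^sup>+x. 1 \<partial>mixture p M0 M1)"
    by simp
  also have "\<dots> = ennreal p + ennreal (1 - p)"
    using nn_integral_mixture[of "\<lambda>_. 1"] prob_space
    by (simp add: prob_space.emeasure_space_1)
  also have "\<dots> = 1"
    using p by (simp flip: ennreal_plus)
  finally show "emeasure (mixture p M0 M1) (space (mixture p M0 M1)) = 1" .
qed

private lemma integral_mixture_nonneg:
  fixes g :: "'a \<Rightarrow> real"
  assumes g: "g \<in> borel_measurable N" "integrable M0 g" "integrable M1 g" and nonneg: "\<And>x. 0 \<le> g x"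
  shows "integrable (mixture p M0 M1) g
    \<and> integral\<^sup>L (mixture p M0 M1) g = p * integral\<^sup>L M0 g + (1 - p) * integral\<^sup>L M1 g"
proof -
  have g_meas: "g \<in> borel_measurable (mixture p M0 M1)"
    using g(1) by (simp add: measurable_cong_sets[OF sets_mixture refl])
  have "(\<integral>\<^sup>+x. ennreal (g x) \<partial>mixture p M0 M1)
      = ennreal p * ennreal (integral\<^sup>L M0 g) + ennreal (1 - p) * ennreal (integral\<^sup>L M1 g)"
    using g nonneg by (simp add: nn_integral_mixture nn_integral_eq_integral)
  also have "\<dots> = ennreal (p * integral\<^sup>L M0 g + (1 - p) * integral\<^sup>L M1 g)"
    using p nonneg by (simp add: integral_nonneg ennreal_mult ennreal_plus)
  finally have nn: "(\<integral>\<^sup>+x. ennreal (g x) \<partial>mixture p M0 M1) = ennreal (p * integral\<^sup>L M0 g + (1 - p) * integral\<^sup>L M1 g)" .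
  have "integrable (mixture p M0 M1) g"
    using nn g_meas nonneg by (intro integrableI_nonneg) auto
  moreover have "integral\<^sup>L (mixture p M0 M1) g = enn2real (\<integral>\<^sup>+x. ennreal (g x) \<partial>mixture p M0 M1)"
    using g_meas nonneg by (intro integral_eq_nn_integral) auto
  moreover have "0 \<le> p * integral\<^sup>L M0 g + (1 - p) * integral\<^sup>L M1 g"
    using p nonneg by (simp add: integral_nonneg)
  ultimately show ?thesis
    unfolding nn by simp
qed

lemma
  fixes g :: "'a \<Rightarrow> real"
  assumes g: "g \<in> borel_measurable N" "integrable M0 g" "integrable M1 g"
  shows integrable_mixture: "integrable (mixture p M0 M1) g"
    and integral_mixture: "integral\<^sup>L (mixture p M0 M1) g = p * integral\<^sup>L M0 g + (1 - p) * integral\<^sup>L M1 g"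
proof -
  let ?gp = "\<lambda>x. max (g x) 0" and ?gn = "\<lambda>x. max (- g x) 0"
  have g_split: "g = (\<lambda>x. ?gp x - ?gn x)"
    by (auto simp: fun_eq_iff max_def)
  have parts: "integrable (mixture p M0 M1) ?gp
      \<and> integral\<^sup>L (mixture p M0 M1) ?gp = p * integral\<^sup>L M0 ?gp + (1 - p) * integral\<^sup>L M1 ?gp"
    "integrable (mixture p M0 M1) ?gn
      \<and> integral\<^sup>L (mixture p M0 M1) ?gn = p * integral\<^sup>L M0 ?gn + (1 - p) * integral\<^sup>L M1 ?gn"
    using g by (intro integral_mixture_nonneg; auto)+
  have "integrable (mixture p M0 M1) (\<lambda>x. ?gp x - ?gn x)"
    using parts by auto
  then show int: "integrable (mixture p M0 M1) g"
    unfolding g_split[symmetric] .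
  have split_integral: "integral\<^sup>L M g = integral\<^sup>L M ?gp - integral\<^sup>L M ?gn" if "integrable M g" for M
    using that by (subst g_split) (simp add: Bochner_Integration.integral_diff)
  show "integral\<^sup>L (mixture p M0 M1) g = p * integral\<^sup>L M0 g + (1 - p) * integral\<^sup>L M1 g"
    unfolding split_integral[OF int] split_integral[OF g(2)] split_integral[OF g(3)]
      parts[THEN conjunct2] by (simp add: algebra_simps)
qed

end

lemma (in prob_space) expectation_abs_squared_le:
  fixes X :: "'a \<Rightarrow> real"
  assumes "integrable M X" "integrable M (\<lambda>x. (X x)\<^sup>2)"
  shows "(expectation (\<lambda>x. \<bar>X x\<bar>))\<^sup>2 \<le> expectation (\<lambda>x. (X x)\<^sup>2)"
  using variance_positive[of "\<lambda>x. \<bar>X x\<bar>"] variance_eq[of "\<lambda>x. \<bar>X x\<bar>"] assms by simp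

lemma (in prob_space) expectation_max_0_eq_half_abs:
  fixes X :: "'a \<Rightarrow> real"
  assumes "integrable M X" "expectation X = 0"
  shows "expectation (\<lambda>x. max (X x) 0) = expectation (\<lambda>x. \<bar>X x\<bar>) / 2"
proof -
  have "(\<lambda>x. max (X x) 0) = (\<lambda>x. (\<bar>X x\<bar> + X x) / 2)"
    by (auto simp: fun_eq_iff max_def)
  then show ?thesis
    using assms by simp
qed

lemma Max_attained:
  fixes f :: "'i::finite \<Rightarrow> 'a::linorder"
  shows "\<exists>i. (MAX i. f i) = f i"
proof -
  have "(MAX i. f i) \<in> range f"
    by (rule Max_in) simp_all
  then show ?thesis
    by (metis rangeE)
qed

lemma integrable_Max:
  fixes X :: "'i::finite \<Rightarrow> 'a \<Rightarrow> real"
  assumes "\<And>i. integrable M (X i)"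
  shows "integrable M (\<lambda>x. MAX i. X i x)"
proof (rule Bochner_Integration.integrable_bound)
  show "integrable M (\<lambda>x. \<Sum>i\<in>UNIV. \<bar>X i x\<bar>)"
    using assms by auto
  show "(\<lambda>x. MAX i. X i x) \<in> borel_measurable M"
    using assms by (intro borel_measurable_Max) auto
  have "\<bar>MAX i. X i x\<bar> \<le> (\<Sum>i\<in>UNIV. \<bar>X i x\<bar>)" for x
  proof -
    obtain i where "(MAX i. X i x) = X i x"
      using Max_attained by blast
    then show ?thesis
      using member_le_sum[of i UNIV "\<lambda>i. \<bar>X i x\<bar>"] by simp
  qed
  then show "AE x in M. norm (MAX i. X i x) \<le> norm (\<Sum>i\<in>UNIV. \<bar>X i x\<bar>)"
    by (simp add: sum_nonneg)
qed

lemma Max_le_Max_plus_sum_max_0: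
  fixes f g :: "'i::finite \<Rightarrow> real"
  shows "(MAX i. f i) \<le> (MAX i. g i) + (\<Sum>i\<in>UNIV. max (f i - g i) 0)"
proof -
  obtain i where i: "(MAX i. f i) = f i"
    using Max_attained by blast
  have "g i \<le> (MAX i. g i)"
    by simp
  moreover have "max (f i - g i) 0 \<le> (\<Sum>i\<in>UNIV. max (f i - g i) 0)"
    by (rule member_le_sum) auto
  ultimately show ?thesis
    unfolding i by linarith
qed

lemma admissible_law_iff:
  "admissible_law mu v M \<longleftrightarrow>
     prob_space M \<and> sets M = sets borel \<and>
     (\<forall>j. integrable M (\<lambda>x. x $ j)) \<and>
     (\<forall>j. integrable M (\<lambda>x. (x $ j)\<^sup>2)) \<and>
     (\<forall>j. (\<integral>x. x $ j \<partial>M) = mu $ j) \<and>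
     (\<forall>j. (\<integral>x. (x $ j)\<^sup>2 \<partial>M) = (v $ j)\<^sup>2 + (mu $ j)\<^sup>2)"
proof -
  have "(\<integral>x. (x $ j - (\<integral>y. y $ j \<partial>M))\<^sup>2 \<partial>M) = (\<integral>x. (x $ j)\<^sup>2 \<partial>M) - (\<integral>x. x $ j \<partial>M)\<^sup>2"
    if "prob_space M" "integrable M (\<lambda>x. x $ j)" "integrable M (\<lambda>x. (x $ j)\<^sup>2)" for j
    using that by (rule prob_space.variance_eq)
  then show ?thesis
    unfolding admissible_law_def by (auto simp: diff_eq_eq)
qed

lemma admissible_law_expectation_abs_le:
  assumes M: "admissible_law mu v M" and v: "v $ j \<ge> 0"
  shows "(\<integral>x. \<bar>x $ j - mu $ j\<bar> \<partial>M) \<le> v $ j"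
proof -
  interpret prob_space M
    using M by (simp add: admissible_law_def)
  have int: "integrable M (\<lambda>x. x $ j - mu $ j)" "integrable M (\<lambda>x. (x $ j - mu $ j)\<^sup>2)"
    using M by (auto simp: admissible_law_def power2_diff)
  have "(\<integral>x. \<bar>x $ j - mu $ j\<bar> \<partial>M)\<^sup>2 \<le> (\<integral>x. (x $ j - mu $ j)\<^sup>2 \<partial>M)"
    by (rule expectation_abs_squared_le[OF int])
  also have "\<dots> = (v $ j)\<^sup>2"
  proof -
    from M have "(\<integral>x. x $ j \<partial>M) = mu $ j"
      and "(\<integral>x. (x $ j - (\<integral>y. y $ j \<partial>M))\<^sup>2 \<partial>M) = (v $ j)\<^sup>2"
      unfolding admissible_law_def by blast+
    then show ?thesis
      by simp
  qed
  finally show ?thesis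
    using v by (rule power2_le_imp_le)
qed

lemma admissible_law_component_le_integral_Max:
  assumes "admissible_law mu v M"
  shows "mu $ j \<le> (\<integral>x. (MAX j. x $ j) \<partial>M)"
proof -
  have int: "\<And>j. integrable M (\<lambda>x. x $ j)" and mean: "(\<integral>x. x $ j \<partial>M) = mu $ j"
    using assms by (auto simp: admissible_law_def)
  have "(\<integral>x. x $ j \<partial>M) \<le> (\<integral>x. (MAX j. x $ j) \<partial>M)"
    using int by (intro integral_mono integrable_Max) auto
  then show ?thesis
    unfolding mean .
qed

lemma admissible_law_integral_Max_le:
  assumes M: "admissible_law mu v M" and v: "\<forall>j. v $ j \<ge> 0"
  shows "(\<integral>x. (MAX j. x $ j) \<partial>M) \<le> (MAX j. mu $ j) + (1/2) * (\<Sum>j\<in>UNIV. v $ j)"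
proof -
  interpret prob_space M
    using M by (simp add: admissible_law_def)
  have int: "\<And>j. integrable M (\<lambda>x. x $ j)" and mean: "\<And>j. (\<integral>x. x $ j \<partial>M) = mu $ j"
    using M by (auto simp: admissible_law_def)
  have excess: "(\<integral>x. max (x $ j - mu $ j) 0 \<partial>M) \<le> v $ j / 2" for j
  proof -
    have "(\<integral>x. x $ j - mu $ j \<partial>M) = 0"
      using int mean by (simp add: prob_space)
    then have "(\<integral>x. max (x $ j - mu $ j) 0 \<partial>M) = (\<integral>x. \<bar>x $ j - mu $ j\<bar> \<partial>M) / 2"
      using int by (intro expectation_max_0_eq_half_abs) auto
    then show ?thesis
      using admissible_law_expectation_abs_le[OF M] v by fastforce
  qed
  have "(\<integral>x. (MAX j. x $ j) \<partial>M)
      \<le> (\<integral>x. (MAX j. mu $ j) + (\<Sum>j\<in>UNIV. max (x $ j - mu $ j) 0) \<partial>M)"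
    using int by (intro integral_mono integrable_Max Max_le_Max_plus_sum_max_0) auto
  also have "\<dots> = (MAX j. mu $ j) + (\<Sum>j\<in>UNIV. \<integral>x. max (x $ j - mu $ j) 0 \<partial>M)"
    using int by (simp add: prob_space)
  also have "\<dots> \<le> (MAX j. mu $ j) + (\<Sum>j\<in>UNIV. v $ j / 2)"
    using excess by (intro add_left_mono sum_mono)
  finally show ?thesis
    by (simp add: sum_divide_distrib)
qed

lemma admissible_law_mixture:
  assumes M0: "admissible_law mu0 v0 M0" and M1: "admissible_law mu1 v1 M1"
    and p: "0 \<le> p" "p \<le> 1"
    and mu: "mu = p *\<^sub>R mu0 + (1 - p) *\<^sub>R mu1"
    and v: "\<And>j. (v $ j)\<^sup>2 = p * ((v0 $ j)\<^sup>2 + (mu0 $ j - mu $ j)\<^sup>2)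
                          + (1 - p) * ((v1 $ j)\<^sup>2 + (mu1 $ j - mu $ j)\<^sup>2)"
  shows "admissible_law mu v (mixture p M0 M1)"
proof -
  note mix = prob_space_mixture sets_mixture integrable_mixture integral_mixture
  note law0 = M0[unfolded admissible_law_iff] and law1 = M1[unfolded admissible_law_iff]
  have mu_j: "mu $ j = p * mu0 $ j + (1 - p) * mu1 $ j" for j
    using mu by simp
  have "(v $ j)\<^sup>2 + (mu $ j)\<^sup>2 = p * ((v0 $ j)\<^sup>2 + (mu0 $ j)\<^sup>2) + (1 - p) * ((v1 $ j)\<^sup>2 + (mu1 $ j)\<^sup>2)" for j
    unfolding v mu_j by (simp add: power2_eq_square algebra_simps)
  with p law0 law1 show ?thesis
    unfolding admissible_law_iff
    by (simp add: mix[OF p, where N=borel] mu_j)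
qed

lemma integrable_return:
  fixes f :: "'a \<Rightarrow> real"
  assumes "f \<in> borel_measurable M" "a \<in> space M"
  shows "integrable (return M a) f"
  using assms by (simp add: integrable_iff_bounded nn_integral_return)

lemma admissible_law_return: "admissible_law a 0 (return borel a)"
  unfolding admissible_law_iff
  by (simp add: prob_space_return integrable_return integral_return)

lemma admissible_law_exists: "\<exists>M. admissible_law mu v M"
proof -
  have "admissible_law mu v (mixture (1/2) (return borel (mu + v)) (return borel (mu - v)))"
    by (rule admissible_law_mixture[OF admissible_law_return admissible_law_return])
      (auto simp: vec_eq_iff field_simps)
  then show ?thesis ..
qed

lemma integral_Max_le_fmax:
  assumes "admissible_law mu v M" "\<forall>j. v $ j \<ge> 0"
  shows "(\<integral>x. (MAX j. x $ j) \<partial>M) \<le> fmax mu v"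
  unfolding fmax_def
proof (rule cSup_upper)
  show "bdd_above {\<integral>x. (MAX j. x $ j) \<partial>M |M. admissible_law mu v M}"
    using admissible_law_integral_Max_le[OF _ assms(2)]
    by (intro bdd_aboveI[where M = "(MAX j. mu $ j) + (1/2) * (\<Sum>j\<in>UNIV. v $ j)"]) blast
qed (use assms(1) in blast)

lemma fmax_le:
  assumes "\<And>M. admissible_law mu v M \<Longrightarrow> (\<integral>x. (MAX j. x $ j) \<partial>M) \<le> c"
  shows "fmax mu v \<le> c"
  unfolding fmax_def using assms admissible_law_exists[of mu v]
  by (intro cSup_least) auto

lemma mult_fmax_le:
  assumes p: "0 \<le> p" and bound: "\<And>M. admissible_law mu v M \<Longrightarrow> p * (\<integral>x. (MAX j. x $ j) \<partial>M) \<le> c"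
  shows "p * fmax mu v \<le> c"
proof (cases "p = 0")
  case True
  then show ?thesis
    using bound admissible_law_exists[of mu v] by auto
next
  case False
  with p have "fmax mu v \<le> c / p"
    using bound by (intro fmax_le) (simp add: field_simps)
  with p False show ?thesis
    by (simp add: field_simps)
qed

lemma convex_combination_fmax_le:
  assumes v_nonneg: "\<forall>j. v $ j \<ge> 0" and p: "0 \<le> p" "p \<le> 1"
    and mu: "mu = p *\<^sub>R mu0 + (1 - p) *\<^sub>R mu1"
    and v: "\<And>j. (v $ j)\<^sup>2 = p * ((v0 $ j)\<^sup>2 + (mu0 $ j - mu $ j)\<^sup>2)
                          + (1 - p) * ((v1 $ j)\<^sup>2 + (mu1 $ j - mu $ j)\<^sup>2)"
  shows "p * fmax mu0 v0 + (1 - p) * fmax mu1 v1 \<le> fmax mu v"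
proof -
  have mixture_le: "p * (\<integral>x. (MAX j. x $ j) \<partial>M0) + (1 - p) * (\<integral>x. (MAX j. x $ j) \<partial>M1) \<le> fmax mu v"
    if M0: "admissible_law mu0 v0 M0" and M1: "admissible_law mu1 v1 M1" for M0 M1
  proof -
    have "admissible_law mu v (mixture p M0 M1)"
      by (rule admissible_law_mixture[OF M0 M1 p mu v])
    then have "(\<integral>x. (MAX j. x $ j) \<partial>mixture p M0 M1) \<le> fmax mu v"
      using v_nonneg by (rule integral_Max_le_fmax)
    moreover have "(\<integral>x. (MAX j. x $ j) \<partial>mixture p M0 M1)
        = p * (\<integral>x. (MAX j. x $ j) \<partial>M0) + (1 - p) * (\<integral>x. (MAX j. x $ j) \<partial>M1)"
      using M0 M1 p unfolding admissible_law_def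
      by (intro integral_mixture integrable_Max) auto
    ultimately show ?thesis
      by simp
  qed
  have "(1 - p) * fmax mu1 v1 \<le> fmax mu v - p * (\<integral>x. (MAX j. x $ j) \<partial>M0)"
    if M0: "admissible_law mu0 v0 M0" for M0
  proof (rule mult_fmax_le)
    show "0 \<le> 1 - p"
      using p by simp
    show "(1 - p) * (\<integral>x. (MAX j. x $ j) \<partial>M1) \<le> fmax mu v - p * (\<integral>x. (MAX j. x $ j) \<partial>M0)"
      if "admissible_law mu1 v1 M1" for M1
      using mixture_le[OF M0 that] by linarith
  qed
  then have "p * fmax mu0 v0 \<le> fmax mu v - (1 - p) * fmax mu1 v1"
    by (intro mult_fmax_le[OF p(1)]) (simp add: algebra_simps)
  then show ?thesis
    by simp
qed

theorem lemma3p7: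
  fixes mu v :: "real^'k"
  assumes v_nonneg: "\<forall>j. v $ j \<ge> 0"
  shows "((MAX j. mu $ j) \<le> fmax mu v
          \<and> fmax mu v \<le> (MAX j. mu $ j) + (1/2) * (\<Sum>j\<in>UNIV. v $ j))
       \<and> (\<forall>mu0 mu1 v0 v1 :: real^'k.
           (\<forall>j. v0 $ j \<ge> 0) \<longrightarrow> (\<forall>j. v1 $ j \<ge> 0) \<longrightarrow>
           mu = (1/2) *\<^sub>R (mu0 + mu1) \<longrightarrow>
           (\<forall>j. (v $ j)\<^sup>2 = (1/2) * (((v0 $ j)\<^sup>2 + (mu0 $ j - mu $ j)\<^sup>2)
                                     + ((v1 $ j)\<^sup>2 + (mu1 $ j - mu $ j)\<^sup>2))) \<longrightarrow>
           (1/2) * (fmax mu0 v0 + fmax mu1 v1) \<le> fmax mu v)"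
proof (intro conjI allI impI)
  obtain M where M: "admissible_law mu v M"
    using admissible_law_exists by blast
  obtain j where "(MAX j. mu $ j) = mu $ j"
    using Max_attained by blast
  then show "(MAX j. mu $ j) \<le> fmax mu v"
    using admissible_law_component_le_integral_Max[OF M] integral_Max_le_fmax[OF M v_nonneg]
    by (metis order_trans)
  show "fmax mu v \<le> (MAX j. mu $ j) + (1/2) * (\<Sum>j\<in>UNIV. v $ j)"
    using admissible_law_integral_Max_le[OF _ v_nonneg] by (rule fmax_le)
next
  fix mu0 mu1 v0 v1 :: "real^'k"
  assume mu: "mu = (1/2) *\<^sub>R (mu0 + mu1)"
    and v: "\<forall>j. (v $ j)\<^sup>2 = (1/2) * (((v0 $ j)\<^sup>2 + (mu0 $ j - mu $ j)\<^sup>2)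
                                 + ((v1 $ j)\<^sup>2 + (mu1 $ j - mu $ j)\<^sup>2))"
  have "(1/2) * fmax mu0 v0 + (1 - 1/2) * fmax mu1 v1 \<le> fmax mu v"
  proof (rule convex_combination_fmax_le[OF v_nonneg])
    show "mu = (1/2) *\<^sub>R mu0 + (1 - 1/2) *\<^sub>R mu1"
      using mu by (simp add: scaleR_right_distrib)
    show "(v $ j)\<^sup>2 = (1/2) * ((v0 $ j)\<^sup>2 + (mu0 $ j - mu $ j)\<^sup>2)
                     + (1 - 1/2) * ((v1 $ j)\<^sup>2 + (mu1 $ j - mu $ j)\<^sup>2)" for j
      using v[rule_format, of j] by (simp add: field_simps)
  qed simp_all
  then show "(1/2) * (fmax mu0 v0 + fmax mu1 v1) \<le> fmax mu v"
    by simp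
qed

end
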